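(* Let $\mathfrak g$ be a finite-dimensional Lie algebra and equip $S(\mathfrak g)=\mathbb{C}[\mathfrak g^*]$ with the Kirillov–Kostant Poisson bracket. Then there is a Poisson-compatible preconnection $\hat\nabla$ on $\mathfrak g^*$ with $$\hat\nabla_v\,{\rm d}w=\tfrac12\,{\rm d}[v,w]\qquad (v,w\in\mathfrak g),$$ whose curvature and torsion are given, for $v,w,z\in\mathfrak g$, by $$R(v,w)\,{\rm d}z=-\tfrac14\,{\rm d}[[v,w],z],\qquad \langle T(v,w),{\rm d}z\rangle=\tfrac12\,[[v,w],z].$$
   Context: The Kirillov–Kostant bracket on $S(\mathfrak g)$ is the Poisson bracket with $\{v,w\}=[v,w]$ for $v,w\in\mathfrak g$ (viewed as linear functions on $\mathfrak g^*$), extended as a biderivation. For a function $a$, $\hat a=\{a,\cdot\}$ is its Hamiltonian vector field; for $v\in\mathfrak g$, $\hat v={\rm ad}_v$. A preconnection assigns to each function $a$ a linear map $\hat\nabla_a$ on $1$-forms with $\hat\nabla_a(b\,\xi)=\{a,b\}\xi+b\,\hat\nabla_a\xi$ and $\hat\nabla_{ab}\xi=a\,\hat\nabla_b\xi+b\,\hat\nabla_a\xi$. It is Poisson-compatible if $\hat\nabla_a{\rm d}b-\hat\nabla_b{\rm d}a={\rm d}\{a,b\}$ for all $a,b$. Its curvature is $R(a,b)=[\hat\nabla_a,\hat\nabla_b]-\hat\nabla_{\{a,b\}}$ and torsion $T(a,b)=\hat\nabla_a\hat b-\hat\nabla_b\hat a-[\hat a,\hat b]$, where for a vector field the action is defined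 by $\langle\hat\nabla_a\hat b,\xi\rangle=\hat a(\langle\hat b,\xi\rangle)-\langle\hat b,\hat\nabla_a\xi\rangle$. *)

theory Defs
  imports Complex_Main "HOL-Library.Poly_Mapping" "HOL-Library.Function_Algebras"
begin

text \<open>The Lie algebra g is C^n with basis indexed by the finite type 'n and
  structure constants c: [e_i, e_j] = sum_k c i j k e_k.  Elements of g are
  coordinate vectors 'n => complex.\<close>

definition lie_br :: "('n::finite \<Rightarrow> 'n \<Rightarrow> 'n \<Rightarrow> complex) \<Rightarrow> ('n \<Rightarrow> complex) \<Rightarrow> ('n \<Rightarrow> complex) \<Rightarrow> ('n \<Rightarrow> complex)" where
  "lie_br c v w = (\<lambda>k. \<Sum>i\<in>UNIV. \<Sum>j\<in>UNIV. v i * w j * c i j k)"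

definition lie_algebra :: "('n::finite \<Rightarrow> 'n \<Rightarrow> 'n \<Rightarrow> complex) \<Rightarrow> bool" where
  "lie_algebra c \<longleftrightarrow>
     (\<forall>v. lie_br c v v = 0) \<and>
     (\<forall>u v w. lie_br c u (lie_br c v w) + lie_br c v (lie_br c w u) + lie_br c w (lie_br c u v) = 0)"

text \<open>S(g) = C[g^*]: polynomials in the coordinates x_i (i.e. the basis vectors e_i viewed
  as linear functions on g^*).\<close>

type_synonym 'n spoly = "('n \<Rightarrow>\<^sub>0 nat) \<Rightarrow>\<^sub>0 complex"

definition cst :: "complex \<Rightarrow> 'n spoly" where
  "cst a = Poly_Mapping.single 0 a"

definition var :: "'n \<Rightarrow> 'n spoly" where
  "var i = Poly_Mapping.single (Poly_Mapping.single i 1) 1"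

text \<open>An element v of g viewed as a linear function on g^*.\<close>
definition lin :: "('n::finite \<Rightarrow> complex) \<Rightarrow> 'n spoly" where
  "lin v = (\<Sum>i\<in>UNIV. cst (v i) * var i)"

definition pdiff :: "'n \<Rightarrow> 'n spoly \<Rightarrow> 'n spoly" where
  "pdiff i p = sum (\<lambda>m::'n \<Rightarrow>\<^sub>0 nat. Poly_Mapping.single (m - Poly_Mapping.single i 1)
                    (of_nat (Poly_Mapping.lookup m i) * Poly_Mapping.lookup p m)) (Poly_Mapping.keys p)"

definition pb :: "('n::finite \<Rightarrow> 'n \<Rightarrow> 'n \<Rightarrow> complex) \<Rightarrow> 'n spoly \<Rightarrow> 'n spoly \<Rightarrow> 'n spoly" where
  "pb c a b = (\<Sum>i\<in>UNIV. \<Sum>j\<in>UNIV. \<Sum>k\<in>UNIV.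
                 cst (c i j k) * var k * pdiff i a * pdiff j b)"

text \<open>1-forms on g^*: the free S(g)-module with basis dx_i, represented by coefficient
  functions.  Vector fields likewise by components X_i = X(x_i).\<close>
type_synonym 'n form1 = "'n \<Rightarrow> 'n spoly"
type_synonym 'n vfield = "'n \<Rightarrow> 'n spoly"

definition dif :: "'n spoly \<Rightarrow> 'n form1" where
  "dif a = (\<lambda>i. pdiff i a)"

definition fmul :: "'n spoly \<Rightarrow> 'n form1 \<Rightarrow> 'n form1" where
  "fmul b \<xi> = (\<lambda>i. b * \<xi> i)"

definition pairing :: "'n::finite vfield \<Rightarrow> 'n form1 \<Rightarrow> 'n spoly" where
  "pairing X \<xi> = (\<Sum>i\<in>UNIV. X i * \<xi> i)"

definition vf_apply :: "'n::finite vfield \<Rightarrow> 'n spoly \<Rightarrow> 'n spoly" where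
  "vf_apply X b = (\<Sum>i\<in>UNIV. X i * pdiff i b)"

definition ham :: "('n::finite \<Rightarrow> 'n \<Rightarrow> 'n \<Rightarrow> complex) \<Rightarrow> 'n spoly \<Rightarrow> 'n vfield" where
  "ham c a = (\<lambda>i. pb c a (var i))"

definition vf_comm :: "'n::finite vfield \<Rightarrow> 'n vfield \<Rightarrow> 'n vfield" where
  "vf_comm X Y = (\<lambda>i. vf_apply X (Y i) - vf_apply Y (X i))"

text \<open>Preconnection: for each a a C-linear map on 1-forms, with the two Leibniz rules;
  the assignment a |-> nabla_a is taken C-linear.\<close>
definition preconnection ::
  "('n::finite \<Rightarrow> 'n \<Rightarrow> 'n \<Rightarrow> complex) \<Rightarrow> ('n spoly \<Rightarrow> 'n form1 \<Rightarrow> 'n form1) \<Rightarrow> bool" where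
  "preconnection c N \<longleftrightarrow>
     (\<forall>a \<xi> \<eta>. N a (\<xi> + \<eta>) = N a \<xi> + N a \<eta>) \<and>
     (\<forall>a (s::complex) \<xi>. N a (fmul (cst s) \<xi>) = fmul (cst s) (N a \<xi>)) \<and>
     (\<forall>a b \<xi>. N (a + b) \<xi> = N a \<xi> + N b \<xi>) \<and>
     (\<forall>a (s::complex) \<xi>. N (cst s * a) \<xi> = fmul (cst s) (N a \<xi>)) \<and>
     (\<forall>a b \<xi>. N a (fmul b \<xi>) = fmul (pb c a b) \<xi> + fmul b (N a \<xi>)) \<and>
     (\<forall>a b \<xi>. N (a * b) \<xi> = fmul a (N b \<xi>) + fmul b (N a \<xi>))"

definition poisson_compatible ::
  "('n::finite \<Rightarrow> 'n \<Rightarrow> 'n \<Rightarrow> complex) \<Rightarrow> ('n spoly \<Rightarrow> 'n form1 \<Rightarrow> 'n form1) \<Rightarrow> bool" where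
  "poisson_compatible c N \<longleftrightarrow>
     (\<forall>a b. N a (dif b) - N b (dif a) = dif (pb c a b))"

definition curvature ::
  "('n::finite \<Rightarrow> 'n \<Rightarrow> 'n \<Rightarrow> complex) \<Rightarrow> ('n spoly \<Rightarrow> 'n form1 \<Rightarrow> 'n form1)
     \<Rightarrow> 'n spoly \<Rightarrow> 'n spoly \<Rightarrow> 'n form1 \<Rightarrow> 'n form1" where
  "curvature c N a b \<xi> = N a (N b \<xi>) - N b (N a \<xi>) - N (pb c a b) \<xi>"

text \<open>Action of nabla_a on a vector field X, defined by
  <nabla_a X, xi> = a-hat(<X, xi>) - <X, nabla_a xi>; components taken against dx_i.\<close>
definition nablaV ::
  "('n::finite \<Rightarrow> 'n \<Rightarrow> 'n \<Rightarrow> complex) \<Rightarrow> ('n spoly \<Rightarrow> 'n form1 \<Rightarrow> 'n form1)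
     \<Rightarrow> 'n spoly \<Rightarrow> 'n vfield \<Rightarrow> 'n vfield" where
  "nablaV c N a X = (\<lambda>i. pb c a (pairing X (dif (var i))) - pairing X (N a (dif (var i))))"

definition torsion ::
  "('n::finite \<Rightarrow> 'n \<Rightarrow> 'n \<Rightarrow> complex) \<Rightarrow> ('n spoly \<Rightarrow> 'n form1 \<Rightarrow> 'n form1)
     \<Rightarrow> 'n spoly \<Rightarrow> 'n spoly \<Rightarrow> 'n vfield" where
  "torsion c N a b = nablaV c N a (ham c b) - nablaV c N b (ham c a) - vf_comm (ham c a) (ham c b)"

end

theory Submission
  imports Defs
begin

text \<open>
  The preconnection \<open>kk_nabla\<close> is \<nabla>_a \<xi> = {a, \<xi>} + 1/2 B(a, \<xi>), where {a, \<xi>} applies the bracket to the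
  coefficients of \<xi> in the basis dx_k and B(a, \<xi>) = \<Sum>_(i,j) \<partial>_i a \<xi>_j d[x_i, x_j]
  (\<open>bracket_form\<close>). As B is S(g)-linear in \<xi> and a derivation in a, both Leibniz rules hold.
  Differentiating the bracket gives d{a, b} = {a, db} - {b, da} + B(a, db), and B(a, db) = -B(b, da)
  by antisymmetry of the structure constants; so the factor 1/2 is exactly what makes \<nabla>
  Poisson-compatible. For v, w \<in> g we have {v, dw} = 0 and B(v, dw) = d[v, w], hence
  \<nabla>_v dw = 1/2 d[v, w]. The curvature and torsion are then combinations of [v, [w, z]] and
  [w, [v, z]], which the Jacobi identity [[v, w], z] = [v, [w, z]] - [w, [v, z]] turns into
  (1/4 - 1/2) [[v, w], z] and (3/2 - 1) [[v, w], z].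
\<close>

subsection \<open>Partial derivatives\<close>

abbreviation unit_exp :: "'n \<Rightarrow> 'n \<Rightarrow>\<^sub>0 nat" where
  "unit_exp i \<equiv> Poly_Mapping.single i 1"

lemma poly_mapping_induct [case_names single add]:
  fixes P :: "('a \<Rightarrow>\<^sub>0 'b::comm_monoid_add) \<Rightarrow> bool"
  assumes single: "\<And>m b. P (Poly_Mapping.single m b)"
    and add: "\<And>p q. P p \<Longrightarrow> P q \<Longrightarrow> P (p + q)"
  shows "P p"
proof -
  have "P (\<Sum>m\<in>A. Poly_Mapping.single m (Poly_Mapping.lookup p m))" if "finite A" for A
    using that
  proof (induction A rule: finite_induct)
    case empty
    show ?case using single[of _ 0] by simp
  next
    case insert
    then show ?case by (simp add: add single)
  qed
  moreover have
    "p = (\<Sum>m\<in>Poly_Mapping.keys p. Poly_Mapping.single m (Poly_Mapping.lookup p m))"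
    by (rule poly_mapping_eqI) (auto simp: lookup_sum lookup_single when_def in_keys_iff)
  ultimately show ?thesis by (metis finite_keys)
qed

lemma pdiff_eq_sum_superset:
  assumes "finite S" "Poly_Mapping.keys p \<subseteq> S"
  shows "pdiff i p = (\<Sum>m\<in>S. Poly_Mapping.single (m - unit_exp i)
                              (of_nat (Poly_Mapping.lookup m i) * Poly_Mapping.lookup p m))"
  unfolding pdiff_def
  by (rule sum.mono_neutral_left) (use assms in \<open>auto simp: in_keys_iff\<close>)

lemma pdiff_single:
  "pdiff i (Poly_Mapping.single m a) =
     Poly_Mapping.single (m - unit_exp i) (of_nat (Poly_Mapping.lookup m i) * a)"
  by (subst pdiff_eq_sum_superset[of "{m}"]) auto

lemma pdiff_add: "pdiff i (p + q) = pdiff i p + pdiff i q"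
proof -
  let ?S = "Poly_Mapping.keys p \<union> Poly_Mapping.keys q"
  have "Poly_Mapping.keys (p + q) \<subseteq> ?S"
    by (rule keys_add)
  then show ?thesis
    by (simp add: pdiff_eq_sum_superset[of ?S] lookup_add distrib_left single_add sum.distrib)
qed

lemma pdiff_0 [simp]: "pdiff i 0 = 0"
  by (simp add: pdiff_def)

lemma pdiff_sum: "pdiff i (sum f A) = (\<Sum>x\<in>A. pdiff i (f x))"
  by (induction A rule: infinite_finite_induct) (auto simp: pdiff_add)

lemma single_mult_pdiff_single:
  "Poly_Mapping.single m a * pdiff i (Poly_Mapping.single n b) =
     Poly_Mapping.single (m + n - unit_exp i) (of_nat (Poly_Mapping.lookup n i) * (a * b))"
proof (cases "Poly_Mapping.lookup n i = 0")
  case False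
  then have "m + (n - unit_exp i) = m + n - unit_exp i"
    by (intro poly_mapping_eqI) (auto simp: lookup_minus lookup_add lookup_single when_def)
  then show ?thesis
    by (simp add: pdiff_single mult_single algebra_simps)
qed (simp add: pdiff_single)

lemma pdiff_mult_single:
  "pdiff i (Poly_Mapping.single m a * Poly_Mapping.single n b) =
     Poly_Mapping.single m a * pdiff i (Poly_Mapping.single n b)
     + pdiff i (Poly_Mapping.single m a) * Poly_Mapping.single n b"
  by (simp add: single_mult_pdiff_single mult.commute[of "pdiff i _"] add.commute[of n m])
     (simp add: mult_single pdiff_single lookup_add algebra_simps flip: single_add)

lemma pdiff_mult: "pdiff i (p * q) = p * pdiff i q + pdiff i p * q"
proof (induction p rule: poly_mapping_induct)
  case (single m a)
  show ?case
  proof (induction q rule: poly_mapping_induct)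
    case (single n b)
    show ?case by (rule pdiff_mult_single)
  next
    case add
    then show ?case by (simp add: pdiff_add algebra_simps)
  qed
next
  case add
  then show ?case by (simp add: pdiff_add algebra_simps)
qed

lemma pdiff_commute: "pdiff i (pdiff k p) = pdiff k (pdiff i p)"
proof (induction p rule: poly_mapping_induct)
  case (single m a)
  have "m - unit_exp k - unit_exp i = m - unit_exp i - unit_exp k"
    by (intro poly_mapping_eqI) (simp add: lookup_minus)
  then show ?case
    by (cases "i = k") (simp_all add: pdiff_single lookup_minus lookup_single mult.left_commute)
next
  case add
  then show ?case by (simp add: pdiff_add)
qed

lemma cst_0 [simp]: "cst 0 = 0"
  by (simp add: cst_def)

lemma cst_1 [simp]: "cst 1 = 1"
  by (simp add: cst_def)

lemma cst_add: "cst (a + b) = cst a + cst b"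
  by (simp add: cst_def single_add)

lemma cst_mult: "cst (a * b) = cst a * cst b"
  by (simp add: cst_def mult_single)

lemma cst_diff: "cst (a - b) = cst a - cst b"
  by (simp add: cst_def single_diff)

lemma cst_uminus: "cst (- a) = - cst a"
  by (simp add: cst_def single_uminus)

lemma cst_sum: "cst (sum f A) = (\<Sum>x\<in>A. cst (f x))"
  by (induction A rule: infinite_finite_induct) (auto simp: cst_add)

lemma pdiff_cst [simp]: "pdiff i (cst s) = 0"
  by (simp add: cst_def pdiff_single)

lemma pdiff_var: "pdiff i (var j) = of_bool (i = j)"
  by (auto simp: var_def pdiff_single lookup_single)

lemma pdiff_lin: "pdiff i (lin v) = cst (v i)"
  by (simp add: lin_def pdiff_sum pdiff_mult pdiff_var)

lemma dif_lin: "dif (lin v) = (\<lambda>i. cst (v i))"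
  by (simp add: dif_def pdiff_lin)

lemma lin_diff: "lin (v - w) = lin v - lin w"
  by (simp add: lin_def cst_diff left_diff_distrib sum_subtractf)

lemma lin_uminus: "lin (- v) = - lin v"
  by (simp add: lin_def cst_uminus sum_negf)

subsection \<open>Lie algebras\<close>

lemma lie_br_add_left: "lie_br c (u + v) w = lie_br c u w + lie_br c v w"
  by (rule ext) (simp add: lie_br_def distrib_right sum.distrib)

lemma lie_br_add_right: "lie_br c u (v + w) = lie_br c u v + lie_br c u w"
  by (rule ext) (simp add: lie_br_def distrib_left distrib_right sum.distrib)

lemma lie_br_uminus_right: "lie_br c v (- w) = - lie_br c v w"
  by (rule ext) (simp add: lie_br_def sum_negf)

lemma lie_br_basis:
  "lie_br c (\<lambda>l. of_bool (l = i)) (\<lambda>l. of_bool (l = j)) = c i j"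
  by (rule ext) (simp add: lie_br_def mult.assoc flip: sum_distrib_left)

lemma lie_br_anticomm:
  assumes "lie_algebra c"
  shows "lie_br c w v = - lie_br c v w"
proof -
  have "lie_br c (v + w) (v + w) = lie_br c v w + lie_br c w v"
    using assms by (simp add: lie_algebra_def lie_br_add_left lie_br_add_right)
  moreover have "lie_br c (v + w) (v + w) = 0"
    using assms by (simp add: lie_algebra_def)
  ultimately show ?thesis
    by (simp add: eq_neg_iff_add_eq_0 add.commute)
qed

lemma structure_const_anticomm:
  assumes "lie_algebra c"
  shows "c j i = - c i j"
  using lie_br_anticomm[OF assms] by (metis lie_br_basis)

lemma lie_br_lie_br_left:
  assumes "lie_algebra c"
  shows "lie_br c (lie_br c v w) z = lie_br c v (lie_br c w z) - lie_br c w (lie_br c v z)"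
proof -
  have "lie_br c v (lie_br c w z) + lie_br c w (lie_br c z v) + lie_br c z (lie_br c v w) = 0"
    using assms by (simp add: lie_algebra_def)
  then show ?thesis
    by (simp add: lie_br_anticomm[OF assms, of z] lie_br_uminus_right algebra_simps)
qed

subsection \<open>The Kirillov--Kostant bracket\<close>

lemma pb_altdef:
  "pb c a b = (\<Sum>i\<in>UNIV. \<Sum>j\<in>UNIV. lin (c i j) * pdiff i a * pdiff j b)"
  by (simp add: pb_def lin_def sum_distrib_right)

lemma pb_add_left: "pb c (a + a') b = pb c a b + pb c a' b"
  by (simp add: pb_altdef pdiff_add algebra_simps sum.distrib)

lemma pb_add_right: "pb c a (b + b') = pb c a b + pb c a b'"
  by (simp add: pb_altdef pdiff_add algebra_simps sum.distrib)

lemma pb_mult_left: "pb c (a * a') b = a * pb c a' b + a' * pb c a b"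
  by (simp add: pb_altdef pdiff_mult sum_distrib_left sum.distrib algebra_simps)

lemma pb_mult_right: "pb c a (b * b') = b * pb c a b' + b' * pb c a b"
  by (simp add: pb_altdef pdiff_mult sum_distrib_left sum.distrib algebra_simps)

lemma pb_cst_left [simp]: "pb c (cst s) b = 0"
  by (simp add: pb_altdef)

lemma pb_cst_right [simp]: "pb c a (cst s) = 0"
  by (simp add: pb_altdef)

lemma pb_0_right [simp]: "pb c a 0 = 0"
  by (simp add: pb_altdef)

lemma pb_sum_right: "pb c a (sum f A) = (\<Sum>x\<in>A. pb c a (f x))"
  by (induction A rule: infinite_finite_induct) (auto simp: pb_add_right)

lemma pb_anticomm:
  assumes "lie_algebra c"
  shows "pb c b a = - pb c a b"
proof -
  have "pb c b a = (\<Sum>j\<in>UNIV. \<Sum>i\<in>UNIV. lin (c j i) * pdiff j b * pdiff i a)"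
    by (simp add: pb_altdef)
  also have "\<dots> = (\<Sum>j\<in>UNIV. \<Sum>i\<in>UNIV. - (lin (c i j) * pdiff i a * pdiff j b))"
    \<comment> \<open>as a simp rule, \<open>structure_const_anticomm\<close> would loop\<close>
    by (intro sum.cong refl)
       (subst structure_const_anticomm[OF assms], simp add: lin_uminus mult_ac)
  also have "\<dots> = - pb c a b"
    by (subst sum.swap) (simp add: pb_altdef sum_negf)
  finally show ?thesis .
qed

lemma lin_lie_br:
  "lin (lie_br c v w) = (\<Sum>i\<in>UNIV. \<Sum>j\<in>UNIV. cst (v i) * cst (w j) * lin (c i j))"
proof -
  have "lin (lie_br c v w)
      = (\<Sum>k\<in>UNIV. \<Sum>i\<in>UNIV. \<Sum>j\<in>UNIV. cst (v i) * cst (w j) * (cst (c i j k) * var k))"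
    by (simp add: lin_def lie_br_def cst_sum cst_mult sum_distrib_left sum_distrib_right mult_ac)
  also have "\<dots>
      = (\<Sum>i\<in>UNIV. \<Sum>k\<in>UNIV. \<Sum>j\<in>UNIV. cst (v i) * cst (w j) * (cst (c i j k) * var k))"
    by (rule sum.swap)
  also have "\<dots> = (\<Sum>i\<in>UNIV. \<Sum>j\<in>UNIV. cst (v i) * cst (w j) * lin (c i j))"
    by (subst sum.swap) (simp add: lin_def sum_distrib_left)
  finally show ?thesis .
qed

lemma pb_lin: "pb c (lin v) (lin w) = lin (lie_br c v w)"
  by (simp add: pb_altdef pdiff_lin lin_lie_br mult_ac)

definition bracket_form ::
  "('n::finite \<Rightarrow> 'n \<Rightarrow> 'n \<Rightarrow> complex) \<Rightarrow> 'n spoly \<Rightarrow> 'n form1 \<Rightarrow> 'n form1" where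
  "bracket_form c a \<xi> = (\<lambda>k. \<Sum>i\<in>UNIV. \<Sum>j\<in>UNIV. cst (c i j k) * pdiff i a * \<xi> j)"

lemma bracket_form_add_left:
  "bracket_form c (a + b) \<xi> = bracket_form c a \<xi> + bracket_form c b \<xi>"
  by (rule ext) (simp add: bracket_form_def pdiff_add algebra_simps sum.distrib)

lemma bracket_form_add_right:
  "bracket_form c a (\<xi> + \<eta>) = bracket_form c a \<xi> + bracket_form c a \<eta>"
  by (rule ext) (simp add: bracket_form_def algebra_simps sum.distrib)

lemma bracket_form_mult_left:
  "bracket_form c (a * b) \<xi> = fmul a (bracket_form c b \<xi>) + fmul b (bracket_form c a \<xi>)"
  by (rule ext)
     (simp add: bracket_form_def fmul_def pdiff_mult sum_distrib_left sum.distrib algebra_simps)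

lemma bracket_form_fmul_right:
  "bracket_form c a (fmul b \<xi>) = fmul b (bracket_form c a \<xi>)"
  by (rule ext) (simp add: bracket_form_def fmul_def sum_distrib_left mult_ac)

lemma bracket_form_cst_left [simp]: "bracket_form c (cst s) \<xi> = 0"
  by (rule ext) (simp add: bracket_form_def)

lemma bracket_form_lin:
  "bracket_form c (lin v) (\<lambda>j. cst (w j)) = (\<lambda>k. cst (lie_br c v w k))"
  by (rule ext) (simp add: bracket_form_def lie_br_def pdiff_lin cst_sum cst_mult mult_ac)

lemma bracket_form_dif_anticomm:
  assumes "lie_algebra c"
  shows "bracket_form c b (dif a) = - bracket_form c a (dif b)"
proof
  fix k
  have "bracket_form c b (dif a) k
      = (\<Sum>j\<in>UNIV. \<Sum>i\<in>UNIV. cst (c i j k) * pdiff i b * pdiff j a)"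
    unfolding bracket_form_def dif_def by (rule sum.swap)
  also have "\<dots> = (\<Sum>j\<in>UNIV. \<Sum>i\<in>UNIV. - (cst (c j i k) * pdiff j a * pdiff i b))"
    by (intro sum.cong refl)
       (subst structure_const_anticomm[OF assms], simp add: cst_uminus mult_ac)
  also have "\<dots> = - bracket_form c a (dif b) k"
    by (simp add: bracket_form_def dif_def sum_negf)
  finally show "bracket_form c b (dif a) k = (- bracket_form c a (dif b)) k"
    by simp
qed

lemma pdiff_pb:
  "pdiff l (pb c a b) = pb c (pdiff l a) b + pb c a (pdiff l b) + bracket_form c a (dif b) l"
proof -
  have "pdiff l (pb c a b) = (\<Sum>i\<in>UNIV. \<Sum>j\<in>UNIV.
      lin (c i j) * pdiff l (pdiff i a) * pdiff j b + lin (c i j) * pdiff i a * pdiff l (pdiff j b)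
      + cst (c i j l) * pdiff i a * pdiff j b)"
    unfolding pb_altdef pdiff_sum
    by (intro sum.cong refl) (simp add: pdiff_mult pdiff_lin distrib_left distrib_right mult_ac)
  then show ?thesis
    by (simp add: pb_altdef bracket_form_def dif_def sum.distrib pdiff_commute[of l])
qed

subsection \<open>Vector fields and preconnections\<close>

lemma sum_apply: "sum f A x = (\<Sum>a\<in>A. f a x)"
  by (induction A rule: infinite_finite_induct) auto

lemma fmul_fmul: "fmul a (fmul b \<xi>) = fmul (a * b) \<xi>"
  by (simp add: fmul_def mult.assoc)

lemma pairing_fmul: "pairing X (fmul b \<xi>) = b * pairing X \<xi>"
  by (simp add: pairing_def fmul_def sum_distrib_left mult_ac)

lemma pairing_diff: "pairing (X - Y) \<xi> = pairing X \<xi> - pairing Y \<xi>"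
  by (simp add: pairing_def left_diff_distrib sum_subtractf)

lemma pairing_sum: "pairing X (sum \<xi> A) = (\<Sum>x\<in>A. pairing X (\<xi> x))"
  by (simp add: pairing_def sum_apply sum_distrib_left) (rule sum.swap)

lemma pairing_dif: "pairing X (dif b) = vf_apply X b"
  by (simp add: pairing_def vf_apply_def dif_def)

lemma pairing_dif_var: "pairing X (dif (var i)) = X i"
  by (simp add: pairing_def dif_def pdiff_var)

lemma vf_apply_mult: "vf_apply X (a * b) = a * vf_apply X b + b * vf_apply X a"
  by (simp add: vf_apply_def pdiff_mult sum_distrib_left sum.distrib algebra_simps)

lemma vf_apply_sum: "vf_apply X (sum f A) = (\<Sum>x\<in>A. vf_apply X (f x))"
  by (simp add: vf_apply_def pdiff_sum sum_distrib_left) (rule sum.swap)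

lemma vf_apply_ham: "vf_apply (ham c a) b = pb c a b"
proof -
  have "vf_apply (ham c a) b
      = (\<Sum>l\<in>UNIV. \<Sum>i\<in>UNIV. lin (c i l) * pdiff i a * pdiff l b)"
    by (simp add: vf_apply_def ham_def pb_altdef pdiff_var sum_distrib_right)
  also have "\<dots> = pb c a b"
    unfolding pb_altdef by (rule sum.swap)
  finally show ?thesis .
qed

lemma vf_apply_vf_comm:
  "vf_apply (vf_comm X Y) b = vf_apply X (vf_apply Y b) - vf_apply Y (vf_apply X b)"
proof -
  have expand: "vf_apply X (vf_apply Y b) = (\<Sum>i\<in>UNIV. vf_apply X (Y i) * pdiff i b)
      + (\<Sum>i\<in>UNIV. \<Sum>j\<in>UNIV. X j * Y i * pdiff j (pdiff i b))" for X Y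
  proof -
    have "vf_apply X (vf_apply Y b) = (\<Sum>i\<in>UNIV. vf_apply X (Y i * pdiff i b))"
      by (simp add: vf_apply_def[of Y] vf_apply_sum)
    also have "\<dots> = (\<Sum>i\<in>UNIV. pdiff i b * vf_apply X (Y i))
        + (\<Sum>i\<in>UNIV. Y i * vf_apply X (pdiff i b))"
      by (simp add: vf_apply_mult sum.distrib add.commute)
    finally show ?thesis
      by (simp add: vf_apply_def[of X "pdiff _ b"] sum_distrib_left mult_ac)
  qed
  have symm: "(\<Sum>i\<in>UNIV. \<Sum>j\<in>UNIV. X j * Y i * pdiff j (pdiff i b))
      = (\<Sum>i\<in>UNIV. \<Sum>j\<in>UNIV. Y j * X i * pdiff j (pdiff i b))"
    by (subst sum.swap) (simp add: pdiff_commute mult.commute)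
  have "vf_apply (vf_comm X Y) b
      = (\<Sum>i\<in>UNIV. vf_apply X (Y i) * pdiff i b)
        - (\<Sum>i\<in>UNIV. vf_apply Y (X i) * pdiff i b)"
    by (simp add: vf_comm_def vf_apply_def[of "\<lambda>i. vf_apply X (Y i) - vf_apply Y (X i)"]
                  left_diff_distrib sum_subtractf)
  then show ?thesis
    by (simp add: expand symm)
qed

lemma preconnection_add:
  "preconnection c N \<Longrightarrow> N a (\<xi> + \<eta>) = N a \<xi> + N a \<eta>"
  by (simp add: preconnection_def)

lemma preconnection_fmul_cst:
  "preconnection c N \<Longrightarrow> N a (fmul (cst s) \<xi>) = fmul (cst s) (N a \<xi>)"
  unfolding preconnection_def by blast

lemma preconnection_sum:
  assumes "preconnection c N"
  shows "N a (sum \<xi> A) = (\<Sum>x\<in>A. N a (\<xi> x))"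
proof -
  have "N a 0 = 0"
    by (metis add_cancel_left_right preconnection_add[OF assms])
  then show ?thesis
    by (induction A rule: infinite_finite_induct) (simp_all add: preconnection_add[OF assms])
qed

lemma dif_lin_eq_sum: "dif (lin z) = (\<Sum>i\<in>UNIV. fmul (cst (z i)) (dif (var i)))"
  by (rule ext) (simp add: dif_def fmul_def pdiff_lin pdiff_var sum_apply)

lemma pairing_nablaV_dif_lin:
  assumes "preconnection c N"
  shows "pairing (nablaV c N a X) (dif (lin z))
           = pb c a (pairing X (dif (lin z))) - pairing X (N a (dif (lin z)))"
proof -
  have "N a (dif (lin z)) = (\<Sum>i\<in>UNIV. fmul (cst (z i)) (N a (dif (var i))))"
    by (simp add: dif_lin_eq_sum preconnection_sum[OF assms] preconnection_fmul_cst[OF assms])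
  then have "pairing X (N a (dif (lin z)))
      = (\<Sum>i\<in>UNIV. cst (z i) * pairing X (N a (dif (var i))))"
    by (simp add: pairing_sum pairing_fmul)
  moreover have "pb c a (pairing X (dif (lin z))) = (\<Sum>i\<in>UNIV. cst (z i) * pb c a (X i))"
    by (simp add: pairing_def dif_lin pb_sum_right pb_mult_right)
  moreover have "pairing (nablaV c N a X) (dif (lin z))
      = (\<Sum>i\<in>UNIV. cst (z i) * pb c a (X i))
        - (\<Sum>i\<in>UNIV. cst (z i) * pairing X (N a (dif (var i))))"
    by (simp add: nablaV_def pairing_dif_var pairing_def[of _ "\<lambda>i. cst (z i)"] dif_lin
                  algebra_simps sum_subtractf)
  ultimately show ?thesis
    by simp
qed

subsection \<open>The connection\<close>

definition kk_nabla ::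
  "('n::finite \<Rightarrow> 'n \<Rightarrow> 'n \<Rightarrow> complex) \<Rightarrow> 'n spoly \<Rightarrow> 'n form1 \<Rightarrow> 'n form1" where
  "kk_nabla c a \<xi> = (\<lambda>k. pb c a (\<xi> k) + cst (1/2) * bracket_form c a \<xi> k)"

lemma kk_nabla_preconnection: "preconnection c (kk_nabla c)"
  unfolding preconnection_def
proof (intro conjI allI)
  fix a \<xi> \<eta>
  show "kk_nabla c a (\<xi> + \<eta>) = kk_nabla c a \<xi> + kk_nabla c a \<eta>"
    by (rule ext) (simp add: kk_nabla_def pb_add_right bracket_form_add_right algebra_simps)
next
  fix a s \<xi>
  show "kk_nabla c a (fmul (cst s) \<xi>) = fmul (cst s) (kk_nabla c a \<xi>)"
    by (rule ext) (simp add: kk_nabla_def fmul_def pb_mult_right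
                             bracket_form_fmul_right[unfolded fmul_def] algebra_simps)
next
  fix a b \<xi>
  show "kk_nabla c (a + b) \<xi> = kk_nabla c a \<xi> + kk_nabla c b \<xi>"
    by (rule ext) (simp add: kk_nabla_def pb_add_left bracket_form_add_left algebra_simps)
next
  fix a s \<xi>
  show "kk_nabla c (cst s * a) \<xi> = fmul (cst s) (kk_nabla c a \<xi>)"
    by (rule ext)
       (simp add: kk_nabla_def fmul_def pb_mult_left bracket_form_mult_left algebra_simps)
next
  fix a b \<xi>
  show "kk_nabla c a (fmul b \<xi>) = fmul (pb c a b) \<xi> + fmul b (kk_nabla c a \<xi>)"
    by (rule ext) (simp add: kk_nabla_def fmul_def pb_mult_right
                             bracket_form_fmul_right[unfolded fmul_def] algebra_simps)
next
  fix a b \<xi>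
  show "kk_nabla c (a * b) \<xi> = fmul a (kk_nabla c b \<xi>) + fmul b (kk_nabla c a \<xi>)"
    by (rule ext)
       (simp add: kk_nabla_def fmul_def pb_mult_left bracket_form_mult_left algebra_simps)
qed

lemma kk_nabla_poisson_compatible:
  assumes "lie_algebra c"
  shows "poisson_compatible c (kk_nabla c)"
  unfolding poisson_compatible_def
proof (intro allI ext)
  fix a b l
  have half: "cst (1/2) * B + cst (1/2) * B = B" for B :: "'n spoly"
    by (simp flip: distrib_right cst_add)
  show "(kk_nabla c a (dif b) - kk_nabla c b (dif a)) l = dif (pb c a b) l"
    by (simp add: kk_nabla_def bracket_form_dif_anticomm[OF assms, of b a]
                  pb_anticomm[OF assms, of b] dif_def[of "pb c a b"] pdiff_pb algebra_simps half)
       (simp add: dif_def)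
qed

lemma kk_nabla_lin_dif_lin:
  "kk_nabla c (lin v) (dif (lin w)) = fmul (cst (1/2)) (dif (lin (lie_br c v w)))"
  by (rule ext) (simp add: kk_nabla_def fmul_def dif_lin bracket_form_lin)

lemma kk_nabla_curvature:
  assumes "lie_algebra c"
  shows "curvature c (kk_nabla c) (lin v) (lin w) (dif (lin z))
           = fmul (cst (-1/4)) (dif (lin (lie_br c (lie_br c v w) z)))"
proof -
  have twice: "kk_nabla c (lin v) (kk_nabla c (lin w) (dif (lin z)))
      = fmul (cst (1/4)) (dif (lin (lie_br c v (lie_br c w z))))" for v w
    by (simp add: kk_nabla_lin_dif_lin preconnection_fmul_cst[OF kk_nabla_preconnection] fmul_fmul
             flip: cst_mult)
  show ?thesis
    unfolding curvature_def twice
    unfolding pb_lin kk_nabla_lin_dif_lin lie_br_lie_br_left[OF assms]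
    by (rule ext) (simp add: fmul_def dif_lin algebra_simps flip: cst_mult cst_diff cst_add)
qed

lemma kk_nabla_torsion:
  assumes "lie_algebra c"
  shows "pairing (torsion c (kk_nabla c) (lin v) (lin w)) (dif (lin z))
           = cst (1/2) * lin (lie_br c (lie_br c v w) z)"
proof -
  have nabla_ham: "pairing (nablaV c (kk_nabla c) (lin v) (ham c (lin w))) (dif (lin z))
      = lin (lie_br c v (lie_br c w z)) - cst (1/2) * lin (lie_br c w (lie_br c v z))" for v w
    by (simp add: pairing_nablaV_dif_lin[OF kk_nabla_preconnection] kk_nabla_lin_dif_lin
                  pairing_fmul)
       (simp add: pairing_dif vf_apply_ham pb_lin)
  have comm: "pairing (vf_comm (ham c (lin v)) (ham c (lin w))) (dif (lin z))
      = lin (lie_br c v (lie_br c w z)) - lin (lie_br c w (lie_br c v z))"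
    by (simp add: pairing_dif vf_apply_vf_comm vf_apply_ham pb_lin)
  show ?thesis
    unfolding torsion_def pairing_diff nabla_ham comm lie_br_lie_br_left[OF assms] lin_diff
    by (simp add: algebra_simps)
qed

theorem proposition5p1p1:
  fixes c :: "'n::finite \<Rightarrow> 'n \<Rightarrow> 'n \<Rightarrow> complex"
  assumes "lie_algebra c"
  shows "\<exists>N. preconnection c N \<and> poisson_compatible c N \<and>
     (\<forall>v w. N (lin v) (dif (lin w)) = fmul (cst (1/2)) (dif (lin (lie_br c v w)))) \<and>
     (\<forall>v w z. curvature c N (lin v) (lin w) (dif (lin z))
                = fmul (cst (-1/4)) (dif (lin (lie_br c (lie_br c v w) z)))) \<and>
     (\<forall>v w z. pairing (torsion c N (lin v) (lin w)) (dif (lin z))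
                = cst (1/2) * lin (lie_br c (lie_br c v w) z))"
  using kk_nabla_preconnection kk_nabla_poisson_compatible[OF assms] kk_nabla_lin_dif_lin
    kk_nabla_curvature[OF assms] kk_nabla_torsion[OF assms]
  by blast

end
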